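(* Let $p\neq 0$ be a real number and let $N=\begin{pmatrix} n_{00} & n_{01}\\ n_{10} & n_{11}\end{pmatrix}\in SL(2,\mathbb{Z})$ have eigenvalues $e^{p}$ and $e^{-p}$. Let $(x_0,x_1)$ be an eigenvector of $N$ for the eigenvalue $e^{p}$ and $(y_0,y_1)$ an eigenvector for $e^{-p}$, and put $z_2=x_1y_0-x_0y_1$. Then there is a co-compact discrete subgroup $\Gamma(p)$ of $G(p)$ of the form $$\Gamma(p)=(\Gamma_N\rtimes_{\psi}\mathbb{Z})\rtimes_{\phi} z_2\mathbb{Z},$$ where $\Gamma_N$ is a co-compact discrete subgroup of $H(1,1)$ such that (1) $\Gamma_N$ is invariant under $\psi(m)$ for every $m\in\mathbb{Z}$, and (2) $\Gamma_S=\Gamma_N\rtimes_\psi\mathbb{Z}$ is a co-compact discrete subgroup of $S=H(1,1)\rtimes_\psi\mathbb{R}$ which is invariant under $\phi(t)$ for every $t\in z_2\mathbb{Z}$.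
   Context: $H(1,1)$ is the $3$-dimensional Heisenberg group of real upper triangular unipotent $3\times 3$ matrices $\begin{pmatrix}1&x&z\\0&1&y\\0&0&1\end{pmatrix}$, identified with $\mathbb{R}^3$ with coordinates $(x,y,z)$, so $(x,y,z)(x',y',z')=(x+x',y+y',z+z'+xy')$. For $u\in\mathbb{R}$, $\psi(u)\in\mathrm{Aut}(H(1,1))$ is $\psi(u)(x,y,z)=(e^{pu}x,e^{-pu}y,z)$, and $S=H(1,1)\rtimes_\psi\mathbb{R}$ is $\mathbb{R}^4$ with coordinates $(x,y,z,u)$ and product $(x,y,z,u)(x',y',z',u')=(x+e^{pu}x',\,y+e^{-pu}y',\,z+z'+xe^{-pu}y',\,u+u')$. For $t\in\mathbb{R}$, $\phi(t)\in\mathrm{Aut}(S)$ is $\phi(t)(x,y,z,u)=(x,y,z+tu,u)$, and $G(p)=S\rtimes_\phi\mathbb{R}$ is $\mathbb{R}^5$ with coordinates $(x,y,z,u,t)$ and product $(x,y,z,u,t)(x',y',z',u',t')=(x+e^{pu}x',\,y+e^{-pu}y',\,z+z'+xe^{-pu}y'+tu',\,u+u',\,t+t')$. For a subgroup $\Gamma_N\subset H(1,1)$ invariant under $\psi(\mathbb{Z})$, $\Gamma_N\rtimes_\psi\mathbb{Z}$ denotes the subgroup $\{(h,u):h\in\Gamma_N,u\in\mathbb{Z}\}$ of $S$; similarly $\Gamma_S\rtimes_\phi z_2\mathbb{Z}=\{(s,t): s\in\Gamma_S,\ t\in z_2\mathbb{Z}\}\subset G(p)$. *)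

theory Defs
  imports "HOL-Analysis.Analysis" "HOL-Algebra.Group" "HOL-Algebra.Coset"
begin

definition heis_mult :: "real \<times> real \<times> real \<Rightarrow> real \<times> real \<times> real \<Rightarrow> real \<times> real \<times> real" where
  "heis_mult a b = (case a of (x,y,z) \<Rightarrow> case b of (x',y',z') \<Rightarrow> (x+x', y+y', z+z'+x*y'))"

definition Heis :: "(real \<times> real \<times> real) monoid" where
  "Heis = \<lparr>carrier = UNIV, mult = heis_mult, one = (0,0,0)\<rparr>"

definition psi :: "real \<Rightarrow> real \<Rightarrow> real \<times> real \<times> real \<Rightarrow> real \<times> real \<times> real" where
  "psi p u h = (case h of (x,y,z) \<Rightarrow> (exp (p*u) * x, exp (-(p*u)) * y, z))"

text \<open>S = H(1,1) \<rtimes>_psi R\<close>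
definition S_mult :: "real \<Rightarrow> real \<times> real \<times> real \<times> real \<Rightarrow> real \<times> real \<times> real \<times> real \<Rightarrow> real \<times> real \<times> real \<times> real" where
  "S_mult p a b = (case a of (x,y,z,u) \<Rightarrow> case b of (x',y',z',u') \<Rightarrow>
     (x + exp (p*u) * x', y + exp (-(p*u)) * y', z + z' + x * exp (-(p*u)) * y', u + u'))"

definition S_grp :: "real \<Rightarrow> (real \<times> real \<times> real \<times> real) monoid" where
  "S_grp p = \<lparr>carrier = UNIV, mult = S_mult p, one = (0,0,0,0)\<rparr>"

definition phi :: "real \<Rightarrow> real \<times> real \<times> real \<times> real \<Rightarrow> real \<times> real \<times> real \<times> real" where
  "phi t s = (case s of (x,y,z,u) \<Rightarrow> (x, y, z + t*u, u))"

text \<open>G(p) = S \<rtimes>_phi R\<close>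
definition G_mult :: "real \<Rightarrow> real \<times> real \<times> real \<times> real \<times> real \<Rightarrow> real \<times> real \<times> real \<times> real \<times> real \<Rightarrow> real \<times> real \<times> real \<times> real \<times> real" where
  "G_mult p a b = (case a of (x,y,z,u,t) \<Rightarrow> case b of (x',y',z',u',t') \<Rightarrow>
     (x + exp (p*u) * x', y + exp (-(p*u)) * y', z + z' + x * exp (-(p*u)) * y' + t * u', u + u', t + t'))"

definition G_grp :: "real \<Rightarrow> (real \<times> real \<times> real \<times> real \<times> real) monoid" where
  "G_grp p = \<lparr>carrier = UNIV, mult = G_mult p, one = (0,0,0,0,0)\<rparr>"

text \<open>Gamma_N \<rtimes>_psi Z and Gamma_S \<rtimes>_phi c Z as subsets.\<close>
definition semidir_Z :: "(real \<times> real \<times> real) set \<Rightarrow> (real \<times> real \<times> real \<times> real) set" where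
  "semidir_Z \<Gamma> = {(x,y,z,u). (x,y,z) \<in> \<Gamma> \<and> u \<in> \<int>}"

definition semidir_cZ :: "real \<Rightarrow> (real \<times> real \<times> real \<times> real) set \<Rightarrow> (real \<times> real \<times> real \<times> real \<times> real) set" where
  "semidir_cZ c \<Gamma> = {(x,y,z,u,t). (x,y,z,u) \<in> \<Gamma> \<and> (\<exists>k::int. t = c * of_int k)}"

definition cocompact_discrete_subgroup :: "('a::topological_space) monoid \<Rightarrow> 'a set \<Rightarrow> bool" where
  "cocompact_discrete_subgroup G \<Gamma> \<longleftrightarrow>
     subgroup \<Gamma> G \<and> discrete \<Gamma> \<and>
     (\<exists>Y :: 'a set topology. quotient_map (top_of_set (carrier G)) Y (\<lambda>g. g <#\<^bsub>G\<^esub> \<Gamma>) \<and> compact_space Y)"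

end

theory Submission
  imports Defs
begin

text \<open>Write \<open>(X, Y) = a (x0, y0) + b (x1, y1)\<close> with \<open>a, b \<in> \<int>\<close>. The points
  \<open>(X, Y, X Y / 2 + z2 / 2 * j)\<close> with \<open>j \<in> \<int>\<close> form the lattice \<open>\<Gamma>\<^sub>N\<close>; here \<open>z2 \<noteq> 0\<close>
  because eigenvectors for the distinct eigenvalues \<open>exp p\<close> and \<open>exp (-p)\<close> are independent.
  Since \<open>\<psi>(1)\<close> multiplies \<open>X\<close> by \<open>exp p\<close> and \<open>Y\<close> by \<open>exp (-p)\<close>, it acts on the
  coefficients \<open>(a, b)\<close> by the transpose of \<open>N \<in> SL(2, \<int>)\<close>, so \<open>\<Gamma>\<^sub>N\<close> is \<open>\<psi>(\<int>)\<close>-invariant;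
  \<open>\<phi>(z2 k)\<close> only moves the centre by multiples of \<open>z2\<close>, which lie in \<open>\<Gamma>\<^sub>N\<close>.
  Each of the three subgroups is uniformly discrete and has a compact \<open>K\<close> with \<open>K \<Gamma> = G\<close>,
  obtained by splitting off fractional parts one coordinate at a time; the image of \<open>K\<close>
  is then all of \<open>G / \<Gamma>\<close>, which is therefore compact.\<close>

section \<open>The groups and their automorphisms\<close>

lemma Heis_group: "group Heis"
proof (rule groupI)
  fix g h k :: "real \<times> real \<times> real"
  show "g \<otimes>\<^bsub>Heis\<^esub> h \<otimes>\<^bsub>Heis\<^esub> k = g \<otimes>\<^bsub>Heis\<^esub> (h \<otimes>\<^bsub>Heis\<^esub> k)"
    by (cases g; cases h; cases k) (simp add: Heis_def heis_mult_def algebra_simps)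
  obtain x y z where "g = (x, y, z)" by (cases g)
  then show "\<exists>h\<in>carrier Heis. h \<otimes>\<^bsub>Heis\<^esub> g = \<one>\<^bsub>Heis\<^esub>"
    by (intro bexI[of _ "(-x, -y, x * y - z)"]) (simp_all add: Heis_def heis_mult_def)
qed (auto simp: Heis_def heis_mult_def)

lemma S_group: "group (S_grp p)"
proof (rule groupI)
  fix g h k :: "real \<times> real \<times> real \<times> real"
  show "g \<otimes>\<^bsub>S_grp p\<^esub> h \<otimes>\<^bsub>S_grp p\<^esub> k = g \<otimes>\<^bsub>S_grp p\<^esub> (h \<otimes>\<^bsub>S_grp p\<^esub> k)"
    by (cases g; cases h; cases k)
       (simp add: S_grp_def S_mult_def algebra_simps exp_add[symmetric] exp_minus_inverse)
  obtain x y z u where "g = (x, y, z, u)" by (cases g)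
  then show "\<exists>h\<in>carrier (S_grp p). h \<otimes>\<^bsub>S_grp p\<^esub> g = \<one>\<^bsub>S_grp p\<^esub>"
    by (intro bexI[of _ "(- exp (-(p*u)) * x, - exp (p*u) * y, x * y - z, -u)"])
       (simp_all add: S_grp_def S_mult_def algebra_simps exp_add[symmetric])
qed (auto simp: S_grp_def S_mult_def)

lemma G_group: "group (G_grp p)"
proof (rule groupI)
  fix g h k :: "real \<times> real \<times> real \<times> real \<times> real"
  show "g \<otimes>\<^bsub>G_grp p\<^esub> h \<otimes>\<^bsub>G_grp p\<^esub> k = g \<otimes>\<^bsub>G_grp p\<^esub> (h \<otimes>\<^bsub>G_grp p\<^esub> k)"
    by (cases g; cases h; cases k)
       (simp add: G_grp_def G_mult_def algebra_simps exp_add[symmetric] exp_minus_inverse)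
  obtain x y z u t where "g = (x, y, z, u, t)" by (cases g)
  then show "\<exists>h\<in>carrier (G_grp p). h \<otimes>\<^bsub>G_grp p\<^esub> g = \<one>\<^bsub>G_grp p\<^esub>"
    by (intro bexI[of _ "(- exp (-(p*u)) * x, - exp (p*u) * y, x * y - z + t * u, -u, -t)"])
       (simp_all add: G_grp_def G_mult_def algebra_simps exp_add[symmetric])
qed (auto simp: G_grp_def G_mult_def)

lemma Heis_inv: "inv\<^bsub>Heis\<^esub> (x, y, z) = (-x, -y, x * y - z)"
  by (rule group.inv_equality[OF Heis_group]) (simp_all add: Heis_def heis_mult_def)

lemma S_inv:
  "inv\<^bsub>S_grp p\<^esub> (x, y, z, u) =
     (case psi p (-u) (inv\<^bsub>Heis\<^esub> (x, y, z)) of (X, Y, Z) \<Rightarrow> (X, Y, Z, -u))"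
  by (rule group.inv_equality[OF S_group])
     (simp_all add: S_grp_def S_mult_def Heis_inv psi_def algebra_simps exp_add[symmetric])

lemma G_inv:
  "inv\<^bsub>G_grp p\<^esub> (x, y, z, u, t) =
     (case phi (-t) (inv\<^bsub>S_grp p\<^esub> (x, y, z, u)) of (X, Y, Z, U) \<Rightarrow> (X, Y, Z, U, -t))"
  by (rule group.inv_equality[OF G_group])
     (simp_all add: G_grp_def G_mult_def S_inv Heis_inv psi_def phi_def algebra_simps
        exp_add[symmetric])

lemma S_mult_semidirect:
  "S_mult p (x, y, z, u) (x', y', z', u') =
     (case heis_mult (x, y, z) (psi p u (x', y', z')) of (X, Y, Z) \<Rightarrow> (X, Y, Z, u + u'))"
  by (simp add: S_mult_def heis_mult_def psi_def mult.assoc)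

lemma G_mult_semidirect:
  "G_mult p (x, y, z, u, t) (x', y', z', u', t') =
     (case S_mult p (x, y, z, u) (phi t (x', y', z', u')) of (X, Y, Z, U) \<Rightarrow> (X, Y, Z, U, t + t'))"
  by (simp add: G_mult_def S_mult_def phi_def)

lemma psi_add: "psi p (u + w) = psi p u \<circ> psi p w"
  by (rule ext) (simp add: psi_def algebra_simps exp_add[symmetric] split: prod.split)

lemma psi_zero: "psi p 0 = id"
  by (rule ext) (simp add: psi_def split: prod.split)

lemma psi_heis_mult: "psi p u (heis_mult g h) = heis_mult (psi p u g) (psi p u h)"
  by (cases g; cases h) (simp add: psi_def heis_mult_def exp_minus_inverse algebra_simps)

lemma phi_S_mult: "phi t (S_mult p g h) = S_mult p (phi t g) (phi t h)"
  by (cases g; cases h) (simp add: phi_def S_mult_def algebra_simps)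

lemma image_of_int_eq_if_add_hom:
  fixes f :: "real \<Rightarrow> 'a \<Rightarrow> 'a"
  assumes add: "\<And>u w. f (u + w) = f u \<circ> f w" and zero: "f 0 = id" and one: "f 1 ` A = A"
  shows "f (of_int k) ` A = A"
proof -
  have "f (-1) ` A = f (-1) ` f 1 ` A"
    by (simp add: one)
  also have "\<dots> = A"
    by (simp add: image_comp flip: add) (simp add: zero)
  finally have minus_one: "f (-1) ` A = A" .
  have "f (of_nat n) ` A = A \<and> f (- of_nat n) ` A = A" for n
  proof (induction n)
    case (Suc n)
    have "f (of_nat (Suc n)) = f 1 \<circ> f (of_nat n)" "f (- of_nat (Suc n)) = f (-1) \<circ> f (- of_nat n)"
      by (simp_all flip: add add: algebra_simps)
    with Suc one minus_one show ?case
      by (simp only: image_comp[symmetric])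
  qed (simp add: zero)
  then show ?thesis
    by (cases k rule: int_cases2) simp_all
qed

section \<open>Uniform lattices are co-compact\<close>

lemma ex_quotient_topology: "\<exists>Y. quotient_map X Y f"
proof -
  define opens where "opens = (\<lambda>U. U \<subseteq> f ` topspace X \<and> openin X {x \<in> topspace X. f x \<in> U})"
  have "opens (S \<inter> T)" if "opens S" "opens T" for S T
  proof -
    have "{x \<in> topspace X. f x \<in> S \<inter> T} = {x \<in> topspace X. f x \<in> S} \<inter> {x \<in> topspace X. f x \<in> T}"
      by blast
    with that show ?thesis by (auto simp: opens_def)
  qed
  moreover have "opens (\<Union>\<K>)" if "\<forall>U\<in>\<K>. opens U" for \<K>
  proof -
    have "{x \<in> topspace X. f x \<in> \<Union>\<K>} = (\<Union>U\<in>\<K>. {x \<in> topspace X. f x \<in> U})"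
      by blast
    with that show ?thesis by (auto simp: opens_def)
  qed
  ultimately have "istopology opens"
    unfolding istopology_def by blast
  then have openin_opens: "openin (topology opens) = opens"
    by (simp add: topology_inverse')
  have "{x \<in> topspace X. f x \<in> f ` topspace X} = topspace X"
    by blast
  then have "opens (f ` topspace X)"
    by (simp add: opens_def)
  then have "\<Union>(Collect opens) = f ` topspace X"
    by (auto simp: opens_def)
  then have topspace_opens: "topspace (topology opens) = f ` topspace X"
    by (simp add: topspace_def openin_opens)
  have "opens U \<longleftrightarrow> openin X {x \<in> topspace X. f x \<in> U}" if "U \<subseteq> f ` topspace X" for U
    using that unfolding opens_def by blast
  then have "quotient_map X (topology opens) f"
    unfolding quotient_map_def openin_opens topspace_opens by blast
  then show ?thesis ..
qed

definition uniform_lattice :: "('a::metric_space) monoid \<Rightarrow> 'a set \<Rightarrow> bool" where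
  "uniform_lattice G \<Gamma> \<longleftrightarrow>
     subgroup \<Gamma> G \<and> uniform_discrete \<Gamma> \<and> (\<exists>K. compact K \<and> carrier G \<subseteq> K <#>\<^bsub>G\<^esub> \<Gamma>)"

lemma cocompact_discrete_subgroup_if_uniform_lattice:
  fixes G :: "('a::metric_space) monoid"
  assumes G: "group G" "carrier G = UNIV" and \<Gamma>: "uniform_lattice G \<Gamma>"
  shows "cocompact_discrete_subgroup G \<Gamma>"
proof -
  obtain K where sub: "subgroup \<Gamma> G" and disc: "uniform_discrete \<Gamma>"
    and K: "compact K" "carrier G \<subseteq> K <#>\<^bsub>G\<^esub> \<Gamma>"
    using \<Gamma> unfolding uniform_lattice_def by blast
  define coset where "coset = (\<lambda>g. g <#\<^bsub>G\<^esub> \<Gamma>)"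
  obtain Y where Y: "quotient_map (top_of_set (carrier G)) Y coset"
    using ex_quotient_topology by blast
  have "coset g \<in> coset ` K" for g
  proof -
    obtain k h where kh: "k \<in> K" "h \<in> \<Gamma>" "g = k \<otimes>\<^bsub>G\<^esub> h"
      using K(2) G(2) unfolding set_mult_def by blast
    have "coset g = k <#\<^bsub>G\<^esub> (h <#\<^bsub>G\<^esub> \<Gamma>)"
      using group.lcos_m_assoc[OF G(1)] subgroup.subset[OF sub] G(2) kh by (simp add: coset_def)
    also have "h <#\<^bsub>G\<^esub> \<Gamma> = \<Gamma>"
      using group.coset_join3[of G h \<Gamma>] G sub kh(2) by simp
    finally show ?thesis
      using kh(1) by (simp add: coset_def)
  qed
  then have "range coset = coset ` K"
    by blast
  then have "topspace Y = coset ` K"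
    using quotient_imp_surjective_map[OF Y] G(2) by simp
  moreover have "compactin Y (coset ` K)"
    using image_compactin[of "top_of_set (carrier G)"] quotient_imp_continuous_map[OF Y] K(1) G(2)
    by simp
  ultimately have "compact_space Y"
    by (simp add: compact_space_def)
  then show ?thesis
    using Y[unfolded coset_def] sub uniform_discrete_imp_discrete[OF disc]
    unfolding cocompact_discrete_subgroup_def by blast
qed

section \<open>Lattices in the semidirect products\<close>

lemma dist_Pair_le_Pair:
  "dist b b' \<le> dist c c' \<Longrightarrow> dist (a, b) (a', b') \<le> dist (a, c) (a', c')"
  by (simp add: dist_Pair_Pair power_mono)

lemma dist_le_dist_Pair_fst: "dist a a' \<le> dist (a, b) (a', b')"
  using dist_fst_le[of "(a, b)" "(a', b')"] by simp

lemma dist_le_dist_Pair_snd: "dist b b' \<le> dist (a, b) (a', b')"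
  using dist_snd_le[of "(a, b)" "(a', b')"] by simp

lemma subgroup_semidir_Z:
  assumes \<Gamma>: "subgroup \<Gamma> Heis" and psi_inv: "\<And>m::int. psi p (of_int m) ` \<Gamma> \<subseteq> \<Gamma>"
  shows "subgroup (semidir_Z \<Gamma>) (S_grp p)"
proof (rule group.subgroupI[OF S_group])
  show "semidir_Z \<Gamma> \<subseteq> carrier (S_grp p)" by (simp add: S_grp_def)
  show "semidir_Z \<Gamma> \<noteq> {}"
    using subgroup.one_closed[OF \<Gamma>] by (auto simp: semidir_Z_def Heis_def)
next
  fix g assume "g \<in> semidir_Z \<Gamma>"
  then obtain x y z m where g: "g = (x, y, z, of_int m)" and h: "(x, y, z) \<in> \<Gamma>"
    by (auto simp: semidir_Z_def elim: Ints_cases)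
  have "psi p (of_int (-m)) (inv\<^bsub>Heis\<^esub> (x, y, z)) \<in> \<Gamma>"
    using psi_inv subgroup.m_inv_closed[OF \<Gamma> h] by blast
  then show "inv\<^bsub>S_grp p\<^esub> g \<in> semidir_Z \<Gamma>"
    by (auto simp: g S_inv semidir_Z_def split: prod.split)
next
  fix g h assume "g \<in> semidir_Z \<Gamma>" "h \<in> semidir_Z \<Gamma>"
  then obtain x y z m x' y' z' u' where g: "g = (x, y, z, of_int m)" "(x, y, z) \<in> \<Gamma>"
    and h: "h = (x', y', z', u')" "(x', y', z') \<in> \<Gamma>" "u' \<in> \<int>"
    by (auto simp: semidir_Z_def elim: Ints_cases)
  have "heis_mult (x, y, z) (psi p (of_int m) (x', y', z')) \<in> \<Gamma>"
    using psi_inv subgroup.m_closed[OF \<Gamma> g(2), of "psi p (of_int m) (x', y', z')"] h(2)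
    by (auto simp: Heis_def)
  then show "g \<otimes>\<^bsub>S_grp p\<^esub> h \<in> semidir_Z \<Gamma>"
    using h(3) by (auto simp: g h S_grp_def S_mult_semidirect semidir_Z_def split: prod.split)
qed

lemma uniform_discrete_semidir_Z:
  assumes "uniform_discrete \<Gamma>"
  shows "uniform_discrete (semidir_Z \<Gamma>)"
proof -
  obtain e where e: "e > 0" "\<And>g h. g \<in> \<Gamma> \<Longrightarrow> h \<in> \<Gamma> \<Longrightarrow> dist g h < e \<Longrightarrow> g = h"
    using assms unfolding uniform_discrete_def by blast
  show ?thesis
  proof (rule uniformI1)
    fix g h assume "g \<in> semidir_Z \<Gamma>" "h \<in> semidir_Z \<Gamma>" and close: "dist g h < min e 1"
    then obtain x y z u x' y' z' u' where gh: "g = (x, y, z, u)" "h = (x', y', z', u')"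
      and mem: "(x, y, z) \<in> \<Gamma>" "(x', y', z') \<in> \<Gamma>" "u \<in> \<int>" "u' \<in> \<int>"
      by (cases g, cases h) (auto simp: semidir_Z_def)
    have "dist (x, y, z) (x', y', z') \<le> dist g h"
      unfolding gh by (intro dist_Pair_le_Pair dist_le_dist_Pair_fst)
    with close have "dist (x, y, z) (x', y', z') < e"
      by simp
    with mem e(2) have "(x, y, z) = (x', y', z')"
      by blast
    moreover have "dist u u' \<le> dist g h"
      unfolding gh by (meson dist_le_dist_Pair_snd order_trans)
    with close mem have "u = u'"
      by (simp add: Ints_eq_abs_less1 dist_real_def)
    ultimately show "g = h"
      by (simp add: gh)
  qed (use e in simp)
qed

lemma fundamental_set_semidir_Z:
  assumes K: "compact K" "carrier Heis \<subseteq> K <#>\<^bsub>Heis\<^esub> \<Gamma>"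
  shows "\<exists>K'. compact K' \<and> carrier (S_grp p) \<subseteq> K' <#>\<^bsub>S_grp p\<^esub> semidir_Z \<Gamma>"
proof (intro exI conjI)
  let ?K' = "(\<lambda>(c, x, y, z). (exp (p * c) * x, exp (-(p * c)) * y, z, c)) ` ({0..1} \<times> K)"
  show "compact ?K'"
    unfolding case_prod_unfold
    by (intro compact_continuous_image compact_Times compact_Icc K(1) continuous_intros)
  show "carrier (S_grp p) \<subseteq> ?K' <#>\<^bsub>S_grp p\<^esub> semidir_Z \<Gamma>"
  proof
    fix g :: "real \<times> real \<times> real \<times> real"
    obtain x y z u where g: "g = (x, y, z, u)"
      by (cases g)
    define c where "c = frac u"
    have "psi p (-c) (x, y, z) \<in> K <#>\<^bsub>Heis\<^esub> \<Gamma>"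
      using K(2) by (auto simp: Heis_def)
    then obtain k h where kh: "k \<in> K" "h \<in> \<Gamma>" "psi p (-c) (x, y, z) = heis_mult k h"
      unfolding set_mult_def Heis_def by auto
    obtain kx ky kz where k: "k = (kx, ky, kz)"
      by (cases k)
    obtain hx hy hz where h: "h = (hx, hy, hz)"
      by (cases h)
    have psi_k: "psi p c k = (exp (p * c) * kx, exp (-(p * c)) * ky, kz)"
      by (simp add: k psi_def)
    have "(x, y, z) = psi p c (heis_mult k h)"
      by (simp flip: kh(3) add: psi_def mult.assoc[symmetric] exp_add[symmetric])
    also have "\<dots> = heis_mult (exp (p * c) * kx, exp (-(p * c)) * ky, kz) (psi p c (hx, hy, hz))"
      by (simp add: psi_heis_mult psi_k h)
    finally have
      "heis_mult (exp (p * c) * kx, exp (-(p * c)) * ky, kz) (psi p c (hx, hy, hz)) = (x, y, z)" ..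
    moreover have "c + of_int \<lfloor>u\<rfloor> = u"
      by (simp add: c_def frac_def)
    ultimately have
      "g = S_mult p (exp (p * c) * kx, exp (-(p * c)) * ky, kz, c) (hx, hy, hz, of_int \<lfloor>u\<rfloor>)"
      by (simp add: g S_mult_semidirect)
    moreover have "(exp (p * c) * kx, exp (-(p * c)) * ky, kz, c) \<in> ?K'"
      using kh(1) frac_ge_0 frac_lt_1[of u]
      by (intro image_eqI[of _ _ "(c, kx, ky, kz)"]) (auto simp: k c_def less_imp_le)
    moreover have "(hx, hy, hz, of_int \<lfloor>u\<rfloor>) \<in> semidir_Z \<Gamma>"
      using kh(2) by (simp add: h semidir_Z_def)
    ultimately show "g \<in> ?K' <#>\<^bsub>S_grp p\<^esub> semidir_Z \<Gamma>"
      unfolding set_mult_def S_grp_def by force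
  qed
qed

lemma uniform_lattice_semidir_Z:
  assumes "uniform_lattice Heis \<Gamma>" and "\<And>m::int. psi p (of_int m) ` \<Gamma> \<subseteq> \<Gamma>"
  shows "uniform_lattice (S_grp p) (semidir_Z \<Gamma>)"
proof -
  obtain K where "subgroup \<Gamma> Heis" "uniform_discrete \<Gamma>" "compact K" "carrier Heis \<subseteq> K <#>\<^bsub>Heis\<^esub> \<Gamma>"
    using assms(1) unfolding uniform_lattice_def by blast
  then show ?thesis
    using subgroup_semidir_Z[OF _ assms(2)] uniform_discrete_semidir_Z fundamental_set_semidir_Z
    unfolding uniform_lattice_def by blast
qed

lemma phi_semidir_Z:
  assumes \<Gamma>: "subgroup \<Gamma> Heis" and central: "\<And>n. n \<in> \<int> \<Longrightarrow> (0, 0, c * n) \<in> \<Gamma>"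
  shows "phi (c * of_int k) ` semidir_Z \<Gamma> = semidir_Z \<Gamma>"
proof -
  have shift: "phi (c * of_int k) g \<in> semidir_Z \<Gamma>" if g_mem: "g \<in> semidir_Z \<Gamma>" for g k
  proof -
    obtain x y z u where g: "g = (x, y, z, u)" "(x, y, z) \<in> \<Gamma>" "u \<in> \<int>"
      using g_mem by (cases g) (auto simp: semidir_Z_def)
    have "heis_mult (x, y, z) (0, 0, c * (of_int k * u)) \<in> \<Gamma>"
      using subgroup.m_closed[OF \<Gamma> g(2) central] g(3) by (simp add: Heis_def)
    then show ?thesis
      using g by (simp add: semidir_Z_def phi_def heis_mult_def algebra_simps)
  qed
  have "phi (c * of_int k) (phi (c * of_int (-k)) g) = g" for g
    by (cases g) (simp add: phi_def algebra_simps)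
  then have "g \<in> phi (c * of_int k) ` semidir_Z \<Gamma>" if "g \<in> semidir_Z \<Gamma>" for g
    using shift[OF that, of "-k"] by (metis image_eqI)
  with shift show ?thesis by blast
qed

lemma subgroup_semidir_cZ:
  assumes \<Gamma>: "subgroup \<Gamma> (S_grp p)" and phi_inv: "\<And>k::int. phi (c * of_int k) ` \<Gamma> \<subseteq> \<Gamma>"
  shows "subgroup (semidir_cZ c \<Gamma>) (G_grp p)"
proof (rule group.subgroupI[OF G_group])
  show "semidir_cZ c \<Gamma> \<subseteq> carrier (G_grp p)" by (simp add: G_grp_def)
  have "(0, 0, 0, 0, c * of_int 0) \<in> semidir_cZ c \<Gamma>"
    using subgroup.one_closed[OF \<Gamma>] unfolding semidir_cZ_def S_grp_def by fastforce
  then show "semidir_cZ c \<Gamma> \<noteq> {}" by blast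
next
  fix g assume "g \<in> semidir_cZ c \<Gamma>"
  then obtain x y z u k where g: "g = (x, y, z, u, c * of_int k)" and s: "(x, y, z, u) \<in> \<Gamma>"
    unfolding semidir_cZ_def by blast
  have "phi (c * of_int (-k)) (inv\<^bsub>S_grp p\<^esub> (x, y, z, u)) \<in> \<Gamma>"
    using phi_inv subgroup.m_inv_closed[OF \<Gamma> s] by blast
  then show "inv\<^bsub>G_grp p\<^esub> g \<in> semidir_cZ c \<Gamma>"
    by (auto simp: g G_inv semidir_cZ_def split: prod.split intro: exI[of _ "-k"])
next
  fix g h assume "g \<in> semidir_cZ c \<Gamma>" "h \<in> semidir_cZ c \<Gamma>"
  then obtain x y z u k x' y' z' u' k' where g: "g = (x, y, z, u, c * of_int k)" "(x, y, z, u) \<in> \<Gamma>"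
    and h: "h = (x', y', z', u', c * of_int k')" "(x', y', z', u') \<in> \<Gamma>"
    unfolding semidir_cZ_def by blast
  have "S_mult p (x, y, z, u) (phi (c * of_int k) (x', y', z', u')) \<in> \<Gamma>"
    using phi_inv subgroup.m_closed[OF \<Gamma> g(2), of "phi (c * of_int k) (x', y', z', u')"] h(2)
    by (auto simp: S_grp_def)
  then show "g \<otimes>\<^bsub>G_grp p\<^esub> h \<in> semidir_cZ c \<Gamma>"
    by (auto simp: g h G_grp_def G_mult_semidirect semidir_cZ_def algebra_simps split: prod.split
        intro: exI[of _ "k + k'"])
qed

lemma uniform_discrete_semidir_cZ:
  assumes "c \<noteq> 0" "uniform_discrete \<Gamma>"
  shows "uniform_discrete (semidir_cZ c \<Gamma>)"
proof -
  obtain e where e: "e > 0" "\<And>g h. g \<in> \<Gamma> \<Longrightarrow> h \<in> \<Gamma> \<Longrightarrow> dist g h < e \<Longrightarrow> g = h"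
    using assms(2) unfolding uniform_discrete_def by blast
  show ?thesis
  proof (rule uniformI1)
    fix g h assume "g \<in> semidir_cZ c \<Gamma>" "h \<in> semidir_cZ c \<Gamma>" and close: "dist g h < min e \<bar>c\<bar>"
    then obtain x y z u k x' y' z' u' k' where
      gh: "g = (x, y, z, u, c * of_int k)" "h = (x', y', z', u', c * of_int k')"
      and mem: "(x, y, z, u) \<in> \<Gamma>" "(x', y', z', u') \<in> \<Gamma>"
      unfolding semidir_cZ_def by blast
    have "dist (x, y, z, u) (x', y', z', u') \<le> dist g h"
      unfolding gh by (intro dist_Pair_le_Pair dist_le_dist_Pair_fst)
    with close have "dist (x, y, z, u) (x', y', z', u') < e"
      by simp
    with mem e(2) have "(x, y, z, u) = (x', y', z', u')"
      by blast
    moreover have "dist (c * of_int k) (c * of_int k') \<le> dist g h"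
      unfolding gh by (meson dist_le_dist_Pair_snd order_trans)
    then have "\<bar>c\<bar> * \<bar>of_int k - of_int k'\<bar> < \<bar>c\<bar> * 1"
      using close by (simp add: dist_real_def abs_mult[symmetric] right_diff_distrib)
    then have "k = k'"
      using assms(1) Ints_eq_abs_less1[of "of_int k" "of_int k'"] by simp
    ultimately show "g = h"
      by (simp add: gh)
  qed (use e assms(1) in simp)
qed

lemma fundamental_set_semidir_cZ:
  assumes "c \<noteq> 0" and K: "compact K" "carrier (S_grp p) \<subseteq> K <#>\<^bsub>S_grp p\<^esub> \<Gamma>"
  shows "\<exists>K'. compact K' \<and> carrier (G_grp p) \<subseteq> K' <#>\<^bsub>G_grp p\<^esub> semidir_cZ c \<Gamma>"
proof (intro exI conjI)
  let ?K' = "(\<lambda>(d, x, y, z, u). (x, y, z + c * d * u, u, c * d)) ` ({0..1} \<times> K)"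
  show "compact ?K'"
    unfolding case_prod_unfold
    by (intro compact_continuous_image compact_Times compact_Icc K(1) continuous_intros)
  show "carrier (G_grp p) \<subseteq> ?K' <#>\<^bsub>G_grp p\<^esub> semidir_cZ c \<Gamma>"
  proof
    fix g :: "real \<times> real \<times> real \<times> real \<times> real"
    obtain x y z u t where g: "g = (x, y, z, u, t)"
      by (cases g)
    define d where "d = frac (t / c)"
    have "phi (-(c * d)) (x, y, z, u) \<in> K <#>\<^bsub>S_grp p\<^esub> \<Gamma>"
      using K(2) by (auto simp: S_grp_def)
    then obtain k h where kh: "k \<in> K" "h \<in> \<Gamma>" "phi (-(c * d)) (x, y, z, u) = S_mult p k h"
      unfolding set_mult_def S_grp_def by auto
    obtain kx ky kz ku where k: "k = (kx, ky, kz, ku)"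
      by (cases k)
    obtain hx hy hz hu where h: "h = (hx, hy, hz, hu)"
      by (cases h)
    have phi_k: "phi (c * d) k = (kx, ky, kz + c * d * ku, ku)"
      by (simp add: k phi_def)
    have "(x, y, z, u) = phi (c * d) (S_mult p k h)"
      by (simp flip: kh(3) add: phi_def)
    also have "\<dots> = S_mult p (kx, ky, kz + c * d * ku, ku) (phi (c * d) (hx, hy, hz, hu))"
      by (simp add: phi_S_mult phi_k h)
    finally have
      "S_mult p (kx, ky, kz + c * d * ku, ku) (phi (c * d) (hx, hy, hz, hu)) = (x, y, z, u)" ..
    moreover have "c * d + c * of_int \<lfloor>t / c\<rfloor> = t"
      using assms(1) by (simp add: d_def frac_def algebra_simps)
    ultimately have
      "g = G_mult p (kx, ky, kz + c * d * ku, ku, c * d) (hx, hy, hz, hu, c * of_int \<lfloor>t / c\<rfloor>)"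
      by (simp add: g G_mult_semidirect)
    moreover have "(kx, ky, kz + c * d * ku, ku, c * d) \<in> ?K'"
      using kh(1) frac_ge_0 frac_lt_1[of "t / c"]
      by (intro image_eqI[of _ _ "(d, kx, ky, kz, ku)"]) (auto simp: k d_def less_imp_le)
    moreover have "(hx, hy, hz, hu, c * of_int \<lfloor>t / c\<rfloor>) \<in> semidir_cZ c \<Gamma>"
      using kh(2) by (auto simp: h semidir_cZ_def)
    ultimately show "g \<in> ?K' <#>\<^bsub>G_grp p\<^esub> semidir_cZ c \<Gamma>"
      unfolding set_mult_def G_grp_def by force
  qed
qed

lemma uniform_lattice_semidir_cZ:
  assumes "c \<noteq> 0" and "uniform_lattice (S_grp p) \<Gamma>" and "\<And>k::int. phi (c * of_int k) ` \<Gamma> \<subseteq> \<Gamma>"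
  shows "uniform_lattice (G_grp p) (semidir_cZ c \<Gamma>)"
proof -
  obtain K where "subgroup \<Gamma> (S_grp p)" "uniform_discrete \<Gamma>" "compact K"
    "carrier (S_grp p) \<subseteq> K <#>\<^bsub>S_grp p\<^esub> \<Gamma>"
    using assms(2) unfolding uniform_lattice_def by blast
  then show ?thesis
    using subgroup_semidir_cZ[OF _ assms(3)] uniform_discrete_semidir_cZ[OF assms(1)]
      fundamental_set_semidir_cZ[OF assms(1)]
    unfolding uniform_lattice_def by blast
qed

section \<open>The lattice \<open>\<Gamma>\<^sub>N\<close> of \<open>H(1,1)\<close>\<close>

lemma Ints_zero_if_abs_mult_less:
  fixes m c :: real
  assumes "m \<in> \<int>" "\<bar>m * c\<bar> < \<bar>c\<bar>"
  shows "m = 0"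
proof -
  have "\<bar>m\<bar> < 1"
    using assms(2) by (simp add: abs_mult mult_less_cancel_right2)
  with assms(1) show ?thesis
    by (rule Ints_nonzero_abs_less1)
qed

lemma eigenvectors_cross_nonzero:
  fixes m00 m01 m10 m11 \<alpha> \<beta> x0 x1 y0 y1 :: real
  assumes "\<alpha> \<noteq> \<beta>" "(x0, x1) \<noteq> (0, 0)" "(y0, y1) \<noteq> (0, 0)"
    and "m00 * x0 + m01 * x1 = \<alpha> * x0" "m10 * x0 + m11 * x1 = \<alpha> * x1"
    and "m00 * y0 + m01 * y1 = \<beta> * y0" "m10 * y0 + m11 * y1 = \<beta> * y1"
  shows "x1 * y0 - x0 * y1 \<noteq> 0"
proof
  assume parallel: "x1 * y0 - x0 * y1 = 0"
  have "(\<alpha> - \<beta>) * (x0 * y0) = 0" "(\<alpha> - \<beta>) * (x0 * y1) = 0"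
    "(\<alpha> - \<beta>) * (x1 * y0) = 0" "(\<alpha> - \<beta>) * (x1 * y1) = 0"
    using assms(4-7) parallel by algebra+
  with assms(1-3) show False
    by auto
qed

locale heis_basis =
  fixes x0 x1 y0 y1 :: real
begin

abbreviation \<zeta> :: real where
  "\<zeta> \<equiv> x1 * y0 - x0 * y1"

text \<open>Thanks to the \<open>X Y / 2\<close> term, the product of two
  lattice points differs from the point with the summed coefficients only by the central
  element \<open>(X Y' - X' Y) / 2\<close>, an integer multiple of \<open>\<zeta> / 2\<close>.\<close>

definition heis_lattice_point :: "real \<Rightarrow> real \<Rightarrow> real \<Rightarrow> real \<times> real \<times> real" where
  "heis_lattice_point a b j =
     (a * x0 + b * x1, a * y0 + b * y1, (a * x0 + b * x1) * (a * y0 + b * y1) / 2 + \<zeta> / 2 * j)"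

definition heis_lattice :: "(real \<times> real \<times> real) set" where
  "heis_lattice = {heis_lattice_point a b j | a b j. a \<in> \<int> \<and> b \<in> \<int> \<and> j \<in> \<int>}"

lemma heis_lattice_pointI [intro]:
  "a \<in> \<int> \<Longrightarrow> b \<in> \<int> \<Longrightarrow> j \<in> \<int> \<Longrightarrow> heis_lattice_point a b j \<in> heis_lattice"
  unfolding heis_lattice_def by blast

lemma heis_latticeE:
  assumes "g \<in> heis_lattice"
  obtains a b j where "a \<in> \<int>" "b \<in> \<int>" "j \<in> \<int>" "g = heis_lattice_point a b j"
  using assms unfolding heis_lattice_def by blast

lemma heis_mult_heis_lattice_point:
  "heis_mult (heis_lattice_point a b j) (heis_lattice_point a' b' j') =
     heis_lattice_point (a + a') (b + b') (j + j' + a' * b - a * b')"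
  by (simp add: heis_lattice_point_def heis_mult_def field_simps)

lemma inv_heis_lattice_point:
  "inv\<^bsub>Heis\<^esub> (heis_lattice_point a b j) = heis_lattice_point (-a) (-b) (-j)"
  by (simp add: heis_lattice_point_def Heis_inv field_simps)

lemma subgroup_heis_lattice: "subgroup heis_lattice Heis"
proof (rule group.subgroupI[OF Heis_group])
  show "heis_lattice \<subseteq> carrier Heis"
    by (simp add: Heis_def)
  show "heis_lattice \<noteq> {}"
    using heis_lattice_pointI[of 0 0 0] by auto
next
  fix g assume "g \<in> heis_lattice"
  then show "inv\<^bsub>Heis\<^esub> g \<in> heis_lattice"
    by (elim heis_latticeE) (auto simp: inv_heis_lattice_point)
next
  fix g h assume "g \<in> heis_lattice" "h \<in> heis_lattice"
  then show "g \<otimes>\<^bsub>Heis\<^esub> h \<in> heis_lattice"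
    by (elim heis_latticeE) (auto simp: Heis_def heis_mult_heis_lattice_point)
qed

lemma central_in_heis_lattice: "n \<in> \<int> \<Longrightarrow> (0, 0, \<zeta> * n) \<in> heis_lattice"
  using heis_lattice_pointI[of 0 0 "2 * n"] by (simp add: heis_lattice_point_def)

definition lattice_gap :: real where
  "lattice_gap = \<bar>\<zeta>\<bar> / (\<bar>x0\<bar> + \<bar>x1\<bar> + \<bar>y0\<bar> + \<bar>y1\<bar> + 2)"

lemma lattice_gap_pos: "\<zeta> \<noteq> 0 \<Longrightarrow> lattice_gap > 0"
  by (simp add: lattice_gap_def add_pos_nonneg)

lemma lattice_gap_le: "2 * lattice_gap \<le> \<bar>\<zeta>\<bar>"
  by (simp add: lattice_gap_def field_simps add_pos_nonneg)

lemma planar_lattice_separated: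
  assumes "\<zeta> \<noteq> 0" "m \<in> \<int>" "n \<in> \<int>"
    and "\<bar>m * x0 + n * x1\<bar> \<le> lattice_gap" "\<bar>m * y0 + n * y1\<bar> \<le> lattice_gap"
  shows "m = 0 \<and> n = 0"
proof -
  have gap: "lattice_gap * (\<bar>x0\<bar> + \<bar>x1\<bar> + \<bar>y0\<bar> + \<bar>y1\<bar> + 2) = \<bar>\<zeta>\<bar>"
    by (simp add: lattice_gap_def add_pos_nonneg)
  have bound: "\<bar>u * c - v * d\<bar> < \<bar>\<zeta>\<bar>"
    if "\<bar>u\<bar> \<le> lattice_gap" "\<bar>v\<bar> \<le> lattice_gap" "\<bar>c\<bar> + \<bar>d\<bar> \<le> \<bar>x0\<bar> + \<bar>x1\<bar> + \<bar>y0\<bar> + \<bar>y1\<bar>"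
    for u v c d
  proof -
    have "\<bar>u * c - v * d\<bar> \<le> lattice_gap * (\<bar>c\<bar> + \<bar>d\<bar>)"
      using that by (intro abs_triangle_ineq4[THEN order_trans])
        (auto simp: abs_mult distrib_left intro!: add_mono mult_right_mono)
    also have "\<dots> < lattice_gap * (\<bar>x0\<bar> + \<bar>x1\<bar> + \<bar>y0\<bar> + \<bar>y1\<bar> + 2)"
      using that(3) lattice_gap_pos[OF assms(1)] by (intro mult_strict_left_mono) auto
    finally show ?thesis
      using gap by simp
  qed
  have "m * \<zeta> = (m * y0 + n * y1) * x1 - (m * x0 + n * x1) * y1"
    "n * \<zeta> = (m * x0 + n * x1) * y0 - (m * y0 + n * y1) * x0"
    by (simp_all add: algebra_simps)
  with assms(4,5) have "\<bar>m * \<zeta>\<bar> < \<bar>\<zeta>\<bar>" "\<bar>n * \<zeta>\<bar> < \<bar>\<zeta>\<bar>"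
    by (auto intro!: bound)
  with assms(2,3) show ?thesis
    by (simp add: Ints_zero_if_abs_mult_less)
qed

lemma uniform_discrete_heis_lattice:
  assumes "\<zeta> \<noteq> 0"
  shows "uniform_discrete heis_lattice"
proof (rule uniformI1)
  show "lattice_gap > 0"
    using assms by (rule lattice_gap_pos)
  fix g h assume "g \<in> heis_lattice" "h \<in> heis_lattice" and close: "dist g h < lattice_gap"
  then obtain a b j a' b' j' where ints: "a \<in> \<int>" "b \<in> \<int>" "j \<in> \<int>" "a' \<in> \<int>" "b' \<in> \<int>" "j' \<in> \<int>"
    and gh: "g = heis_lattice_point a b j" "h = heis_lattice_point a' b' j'"
    by (elim heis_latticeE)
  have dists: "dist (fst g) (fst h) \<le> dist g h" "dist (fst (snd g)) (fst (snd h)) \<le> dist g h"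
    "dist (snd (snd g)) (snd (snd h)) \<le> dist g h"
    by (meson dist_fst_le dist_snd_le order_trans)+
  have "fst g - fst h = (a - a') * x0 + (b - b') * x1"
    "fst (snd g) - fst (snd h) = (a - a') * y0 + (b - b') * y1"
    by (simp_all add: gh heis_lattice_point_def algebra_simps)
  with dists close have "\<bar>(a - a') * x0 + (b - b') * x1\<bar> \<le> lattice_gap"
    "\<bar>(a - a') * y0 + (b - b') * y1\<bar> \<le> lattice_gap"
    by (simp_all add: dist_real_def)
  then have "a = a'" "b = b'"
    using planar_lattice_separated[OF assms, of "a - a'" "b - b'"] ints by auto
  then have "snd (snd g) - snd (snd h) = (j - j') * (\<zeta> / 2)"
    by (simp add: gh heis_lattice_point_def field_simps)
  with dists close lattice_gap_le have "\<bar>(j - j') * (\<zeta> / 2)\<bar> < \<bar>\<zeta> / 2\<bar>"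
    by (simp add: dist_real_def)
  then have "j - j' = 0"
    using ints by (intro Ints_zero_if_abs_mult_less) auto
  with gh \<open>a = a'\<close> \<open>b = b'\<close> show "g = h"
    by simp
qed

lemma ex_coordinates:
  assumes "\<zeta> \<noteq> 0"
  shows "\<exists>s t. s * x0 + t * x1 = x \<and> s * y0 + t * y1 = y"
proof (intro exI conjI)
  let ?s = "(y * x1 - x * y1) / \<zeta>" and ?t = "(x * y0 - y * x0) / \<zeta>"
  have "?s * x0 + ?t * x1 = x * \<zeta> / \<zeta>" "?s * y0 + ?t * y1 = y * \<zeta> / \<zeta>"
    by (simp_all add: divide_simps) algebra+
  with assms show "?s * x0 + ?t * x1 = x" "?s * y0 + ?t * y1 = y"
    by simp_all
qed

lemma fundamental_set_heis_lattice:
  assumes "\<zeta> \<noteq> 0"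
  shows "\<exists>K. compact K \<and> carrier Heis \<subseteq> K <#>\<^bsub>Heis\<^esub> heis_lattice"
proof (intro exI conjI)
  let ?K = "(\<lambda>(s, t, r). (s * x0 + t * x1, s * y0 + t * y1, \<zeta> * r)) ` ({0..1} \<times> {0..1} \<times> {0..1})"
  show "compact ?K"
    unfolding case_prod_unfold
    by (intro compact_continuous_image compact_Times compact_Icc continuous_intros)
  show "carrier Heis \<subseteq> ?K <#>\<^bsub>Heis\<^esub> heis_lattice"
  proof
    fix g :: "real \<times> real \<times> real"
    obtain x y z where g: "g = (x, y, z)"
      by (cases g)
    obtain s t where st: "s * x0 + t * x1 = x" "s * y0 + t * y1 = y"
      using ex_coordinates[OF assms] by blast
    define X where "X = \<lfloor>s\<rfloor> * x0 + \<lfloor>t\<rfloor> * x1"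
    define Y where "Y = \<lfloor>s\<rfloor> * y0 + \<lfloor>t\<rfloor> * y1"
    define kx where "kx = frac s * x0 + frac t * x1"
    define ky where "ky = frac s * y0 + frac t * y1"
    define w where "w = (z - X * Y / 2 - kx * Y) / \<zeta>"
    have "kx + X = x" "ky + Y = y"
      using st by (simp_all add: kx_def ky_def X_def Y_def frac_def algebra_simps)
    moreover have "\<zeta> * frac w + (X * Y / 2 + \<zeta> / 2 * (2 * \<lfloor>w\<rfloor>)) + kx * Y = z"
      using assms by (simp add: w_def frac_def field_simps)
    ultimately have "g = heis_mult (kx, ky, \<zeta> * frac w) (heis_lattice_point \<lfloor>s\<rfloor> \<lfloor>t\<rfloor> (2 * \<lfloor>w\<rfloor>))"
      by (simp add: g heis_mult_def heis_lattice_point_def flip: X_def Y_def)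
    moreover have "(kx, ky, \<zeta> * frac w) \<in> ?K"
      using frac_ge_0 less_imp_le[OF frac_lt_1]
      by (intro image_eqI[of _ _ "(frac s, frac t, frac w)"]) (auto simp: kx_def ky_def)
    moreover have "heis_lattice_point \<lfloor>s\<rfloor> \<lfloor>t\<rfloor> (2 * \<lfloor>w\<rfloor>) \<in> heis_lattice"
      by auto
    ultimately show "g \<in> ?K <#>\<^bsub>Heis\<^esub> heis_lattice"
      unfolding set_mult_def Heis_def by force
  qed
qed

lemma psi_one_heis_lattice_point:
  assumes "n00 * x0 + n01 * x1 = exp p * x0" "n10 * x0 + n11 * x1 = exp p * x1"
    and "n00 * y0 + n01 * y1 = exp (-p) * y0" "n10 * y0 + n11 * y1 = exp (-p) * y1"
  shows "psi p 1 (heis_lattice_point a b j) =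
    heis_lattice_point (n00 * a + n10 * b) (n01 * a + n11 * b) j"
proof -
  have X: "exp p * (a * x0 + b * x1) = (n00 * a + n10 * b) * x0 + (n01 * a + n11 * b) * x1"
    and Y: "exp (-p) * (a * y0 + b * y1) = (n00 * a + n10 * b) * y0 + (n01 * a + n11 * b) * y1"
    using assms by algebra+
  have "exp p * (a * x0 + b * x1) * (exp (-p) * (a * y0 + b * y1)) =
      (a * x0 + b * x1) * (a * y0 + b * y1)"
    by (simp add: exp_minus_inverse algebra_simps)
  then show ?thesis
    unfolding heis_lattice_point_def psi_def prod.case mult_1_right X Y by simp
qed

lemma psi_one_heis_lattice:
  fixes n00 n01 n10 n11 :: int
  assumes "n00 * n11 - n01 * n10 = 1"
    and "n00 * x0 + n01 * x1 = exp p * x0" "n10 * x0 + n11 * x1 = exp p * x1"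
    and "n00 * y0 + n01 * y1 = exp (-p) * y0" "n10 * y0 + n11 * y1 = exp (-p) * y1"
  shows "psi p 1 ` heis_lattice = heis_lattice"
proof
  note psi_point = psi_one_heis_lattice_point[OF assms(2-5)]
  show "psi p 1 ` heis_lattice \<subseteq> heis_lattice"
  proof
    fix g assume "g \<in> psi p 1 ` heis_lattice"
    then obtain a b j where "a \<in> \<int>" "b \<in> \<int>" "j \<in> \<int>" "g = psi p 1 (heis_lattice_point a b j)"
      by (auto elim: heis_latticeE)
    then show "g \<in> heis_lattice"
      by (auto simp: psi_point)
  qed
  show "heis_lattice \<subseteq> psi p 1 ` heis_lattice"
  proof
    fix g assume "g \<in> heis_lattice"
    then obtain a b j where ints: "a \<in> \<int>" "b \<in> \<int>" "j \<in> \<int>" and g: "g = heis_lattice_point a b j"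
      by (elim heis_latticeE)
    \<comment> \<open>\<open>N\<close> is unimodular, so the coefficient map \<open>(a, b) \<mapsto> N\<^sup>T (a, b)\<close> has an integral inverse.\<close>
    have det: "real_of_int n00 * of_int n11 - of_int n01 * of_int n10 = 1"
      using arg_cong[OF assms(1), of real_of_int] by simp
    have "n00 * (n11 * a - n10 * b) + n10 * (n00 * b - n01 * a) = a"
      "n01 * (n11 * a - n10 * b) + n11 * (n00 * b - n01 * a) = b"
      using det by algebra+
    then have "g = psi p 1 (heis_lattice_point (n11 * a - n10 * b) (n00 * b - n01 * a) j)"
      by (simp add: g psi_point)
    moreover have "heis_lattice_point (n11 * a - n10 * b) (n00 * b - n01 * a) j \<in> heis_lattice"
      using ints by auto
    ultimately show "g \<in> psi p 1 ` heis_lattice"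
      by blast
  qed
qed

lemma uniform_lattice_heis_lattice: "\<zeta> \<noteq> 0 \<Longrightarrow> uniform_lattice Heis heis_lattice"
  unfolding uniform_lattice_def
  using subgroup_heis_lattice uniform_discrete_heis_lattice fundamental_set_heis_lattice by blast

end

theorem proposition2p2:
  fixes p :: real and n00 n01 n10 n11 :: int and x0 x1 y0 y1 z2 :: real
  assumes "p \<noteq> 0"
    and "n00 * n11 - n01 * n10 = 1"
    and "(x0, x1) \<noteq> (0, 0)"
    and "of_int n00 * x0 + of_int n01 * x1 = exp p * x0"
    and "of_int n10 * x0 + of_int n11 * x1 = exp p * x1"
    and "(y0, y1) \<noteq> (0, 0)"
    and "of_int n00 * y0 + of_int n01 * y1 = exp (-p) * y0"
    and "of_int n10 * y0 + of_int n11 * y1 = exp (-p) * y1"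
    and "z2 = x1 * y0 - x0 * y1"
  shows "\<exists>\<Gamma>N :: (real \<times> real \<times> real) set.
           cocompact_discrete_subgroup Heis \<Gamma>N
         \<and> (\<forall>m::int. psi p (of_int m) ` \<Gamma>N = \<Gamma>N)
         \<and> cocompact_discrete_subgroup (S_grp p) (semidir_Z \<Gamma>N)
         \<and> (\<forall>k::int. phi (z2 * of_int k) ` semidir_Z \<Gamma>N = semidir_Z \<Gamma>N)
         \<and> cocompact_discrete_subgroup (G_grp p) (semidir_cZ z2 (semidir_Z \<Gamma>N))"
proof -
  interpret heis_basis x0 x1 y0 y1 .
  have "exp p \<noteq> exp (-p)"
    using assms(1) by simp
  then have "x1 * y0 - x0 * y1 \<noteq> 0"
    by (rule eigenvectors_cross_nonzero[OF _ assms(3,6,4,5,7,8)])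
  with assms(9) have z2: "z2 \<noteq> 0"
    by simp
  have psi_inv: "psi p (of_int m) ` heis_lattice = heis_lattice" for m :: int
    using psi_one_heis_lattice[OF assms(2,4,5,7,8)]
    by (rule image_of_int_eq_if_add_hom[OF psi_add psi_zero])
  have phi_inv: "phi (z2 * of_int k) ` semidir_Z heis_lattice = semidir_Z heis_lattice" for k :: int
    using phi_semidir_Z[OF subgroup_heis_lattice central_in_heis_lattice] assms(9) by simp
  have "uniform_lattice Heis heis_lattice"
    using uniform_lattice_heis_lattice z2 assms(9) by simp
  moreover from this have "uniform_lattice (S_grp p) (semidir_Z heis_lattice)"
    using psi_inv by (intro uniform_lattice_semidir_Z) auto
  moreover from this have "uniform_lattice (G_grp p) (semidir_cZ z2 (semidir_Z heis_lattice))"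
    using z2 phi_inv by (intro uniform_lattice_semidir_cZ) auto
  ultimately show ?thesis
    using psi_inv phi_inv Heis_group S_group G_group
    by (intro exI[of _ heis_lattice])
       (simp add: cocompact_discrete_subgroup_if_uniform_lattice Heis_def S_grp_def G_grp_def)
qed

end
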